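(* For all integers $k \geq 2$ and $n \geq 2k+3$, \[\iota(B_{n,C(k)}, \{K_{1,k}\}) = \left\lfloor \frac{2n}{2k+3} \right\rfloor.\]
   Context: Graphs are finite and simple. For $D \subseteq V(G)$, $N[D]$ is the union of closed neighbourhoods of vertices of $D$; $D$ is $\{K_{1,k}\}$-isolating if $G - N[D]$ contains no copy of the star $K_{1,k}$ (equivalently has maximum degree less than $k$), and $\iota(G,\{K_{1,k}\})$ is the minimum size of such a set. Define $\mathrm{mod}^*$ as the usual modulo operation except that $ba \ \mathrm{mod}^*\ a = a$ (instead of $0$). For $2 \le r < m$ (and similarly for $r \geq 1$), $C_m^r$ is the graph on $[m]$ with edges $\{i, (i+j) \ \mathrm{mod}^*\ m\}$ for $i \in [m]$, $j \in [r]$. For $k \geq 2$: if $k$ is even, $C(k) = C_{2k+2}^{k/2}$; if $k$ is odd, $C(k)$ has vertex set $[2k+2]$ and edge set $E(C_{2k+2}^{(k-1)/2}) \cup \{\{i, i+\frac{k+1}{2}\} : i \in [\frac{k+1}{2}] \cup ([k+1+\frac{k+1}{2}] \setminus [k+1])\}$. For $n \geq 2k+3$, $B_{n,C(k)}$ is defined as follows. Let $q = \lfloor n/(2k+3) \rfloor$ and $n = q(2k+3)+r$ with $0 \le r \le 2k+2$. Let $u_1,\dots,u_{q+r}$ be new vertices. Let $R$ be the empty graph if $r \le 1$, and if $r \ge 2$ let $R$ be the graph with vertex set $\{u_{q+j} : j \in [r]\}$ and edge set $\{u_{q+r}u_{q+j} : j \in [r-1]\}$. Let $G_1,\dots,G_q$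 be pairwise disjoint copies of $C(k)$ (disjoint from the $u$'s), with $v_{i,1},\dots,v_{i,2k+2}$ the vertices of $G_i$ corresponding to $1,\dots,2k+2$. Let $t = \min\{1,r\}$. Then $B_{n,C(k)}$ has vertex set $\{u_1,\dots,u_{q+r}\} \cup \bigcup_{i=1}^q V(G_i)$ and edge set $\{u_iv_{i,1} : i \in [q]\} \cup \{u_iu_{i+1} : i \in [q+t-1]\} \cup E(R) \cup \bigcup_{i=1}^q E(G_i)$. *)

theory Defs
  imports Main
begin

definition closed_nbhd :: "'a set \<Rightarrow> 'a set set \<Rightarrow> 'a set \<Rightarrow> 'a set" where
  "closed_nbhd V E D = D \<union> {u \<in> V. \<exists>v\<in>D. {u, v} \<in> E}"

definition has_star :: "'a set \<Rightarrow> 'a set set \<Rightarrow> nat \<Rightarrow> bool" where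
  "has_star W E k \<longleftrightarrow> (\<exists>c L. c \<in> W \<and> L \<subseteq> W \<and> c \<notin> L \<and> card L = k \<and> finite L
       \<and> (\<forall>x\<in>L. {c, x} \<in> E))"

definition star_isolating :: "'a set \<Rightarrow> 'a set set \<Rightarrow> nat \<Rightarrow> 'a set \<Rightarrow> bool" where
  "star_isolating V E k D \<longleftrightarrow> D \<subseteq> V \<and> \<not> has_star (V - closed_nbhd V E D) E k"

definition iota_star :: "'a set \<Rightarrow> 'a set set \<Rightarrow> nat \<Rightarrow> nat" where
  "iota_star V E k = Min (card ` {D. star_isolating V E k D})"

definition modstar :: "nat \<Rightarrow> nat \<Rightarrow> nat" where
  "modstar x a = (if x mod a = 0 then a else x mod a)"

definition circ_pow_edges :: "nat \<Rightarrow> nat \<Rightarrow> nat set set" where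
  "circ_pow_edges m r = {{i, modstar (i + j) m} | i j. i \<in> {1..m} \<and> j \<in> {1..r}}"

definition Ck_edges :: "nat \<Rightarrow> nat set set" where
  "Ck_edges k = (if even k then circ_pow_edges (2*k+2) (k div 2)
     else circ_pow_edges (2*k+2) ((k - 1) div 2) \<union>
       {{i, i + (k + 1) div 2} | i. i \<in> {1..(k+1) div 2} \<union> ({1..k+1+(k+1) div 2} - {1..k+1})})"

datatype bvert = U nat | W nat nat  (* W i j = v_{i,j}, vertex j of copy G_i *)

definition B_verts :: "nat \<Rightarrow> nat \<Rightarrow> bvert set" where
  "B_verts k n = (let q = n div (2*k+3); r = n mod (2*k+3) in
     U ` {1..q+r} \<union> {W i j | i j. i \<in> {1..q} \<and> j \<in> {1..2*k+2}})"

definition B_edges :: "nat \<Rightarrow> nat \<Rightarrow> bvert set set" where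
  "B_edges k n = (let q = n div (2*k+3); r = n mod (2*k+3); t = min 1 r in
     {{U i, W i 1} | i. i \<in> {1..q}}
     \<union> {{U i, U (i+1)} | i. i \<in> {1..q+t-1}}
     \<union> (if r \<ge> 2 then {{U (q+r), U (q+j)} | j. j \<in> {1..r-1}} else {})
     \<union> {{W i a, W i b} | i a b. i \<in> {1..q} \<and> {a, b} \<in> Ck_edges k})"

end

theory Submission
  imports Defs
begin

(* C(k) is a k-regular graph on the cycle 1..2k+2 in which every edge joins vertices at cyclic
   distance at most ceil(k/2), those of length (k+1)/2 (k odd) forming a perfect matching;
   this makes the closed neighbourhoods of antipodal vertices x and x+k+1 disjoint.
   Lower bound: if an isolating set met the block u_i + G_i in at most one vertex, it would
   dominate only the closed neighbourhood of a single vertex x of G_i (u_i dominates just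
   v_{i,1}), and the antipode of x with its k neighbours would be an undominated K_{1,k}; if
   r >= k+2, the star centred at u_{q+r} forces one further vertex.
   Upper bound: the u_i and v_{i,k+2}, together with u_{q+r} when r >= k+2, leave only
   components with at most k vertices.
   Finally floor(2n/(2k+3)) = 2q + [r >= k+2]. *)

lemma modstar_eq:
  assumes "1 \<le> i" "i \<le> m" "j < m"
  shows "modstar (i + j) m = (if i + j \<le> m then i + j else i + j - m)"
proof -
  have "(i + j) mod m = (if i + j < m then i + j else i + j - m)"
    using assms by (auto simp: le_mod_geq)
  then show ?thesis using assms by (auto simp: modstar_def)
qed

lemma inj_on_modstar_shift:
  assumes "x \<in> {1..m}"
  shows "inj_on (\<lambda>j. modstar (x + j) m) {0..<m}"
  using assms by (auto simp: inj_on_def modstar_eq split: if_splits)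

definition cyc_dist_eq :: "nat \<Rightarrow> nat \<Rightarrow> nat \<Rightarrow> nat \<Rightarrow> bool" where
  "cyc_dist_eq m a b j \<longleftrightarrow> b = a + j \<or> b + m = a + j \<or> a = b + j \<or> a + m = b + j"

lemma circ_pow_edges_iff:
  assumes "r < m"
  shows "{a, b} \<in> circ_pow_edges m r \<longleftrightarrow>
    a \<in> {1..m} \<and> b \<in> {1..m} \<and> (\<exists>j\<in>{1..r}. cyc_dist_eq m a b j)"
proof
  assume "{a, b} \<in> circ_pow_edges m r"
  then obtain i j where ij: "i \<in> {1..m}" "j \<in> {1..r}" "{a, b} = {i, modstar (i + j) m}"
    unfolding circ_pow_edges_def by blast
  then have "(a = i \<and> b = modstar (i + j) m) \<or> (b = i \<and> a = modstar (i + j) m)"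
    by (auto simp: doubleton_eq_iff)
  then show "a \<in> {1..m} \<and> b \<in> {1..m} \<and> (\<exists>j\<in>{1..r}. cyc_dist_eq m a b j)"
    using ij assms modstar_eq[of i m j]
    by (auto simp: cyc_dist_eq_def split: if_splits intro!: bexI[of _ j])
next
  assume "a \<in> {1..m} \<and> b \<in> {1..m} \<and> (\<exists>j\<in>{1..r}. cyc_dist_eq m a b j)"
  then obtain j where ab: "a \<in> {1..m}" "b \<in> {1..m}" and j: "j \<in> {1..r}" "cyc_dist_eq m a b j"
    by blast
  have edge: "{i, modstar (i + j) m} \<in> circ_pow_edges m r" if "i \<in> {1..m}" for i
    unfolding circ_pow_edges_def using that j(1) by blast
  from j(2) consider "modstar (a + j) m = b" | "modstar (b + j) m = a"
    using ab j(1) assms modstar_eq[of a m j] modstar_eq[of b m j]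
    unfolding cyc_dist_eq_def by (elim disjE) auto
  then show "{a, b} \<in> circ_pow_edges m r"
    using edge[OF ab(1)] edge[OF ab(2)] by cases (auto simp: insert_commute)
qed

definition Ck_adj :: "nat \<Rightarrow> nat \<Rightarrow> nat \<Rightarrow> bool" where
  "Ck_adj k a b \<longleftrightarrow> {a, b} \<in> Ck_edges k"

definition Ck_matched :: "nat \<Rightarrow> nat \<Rightarrow> nat \<Rightarrow> bool" where
  "Ck_matched k a b \<longleftrightarrow> odd k \<and> (\<exists>i \<in> {1..(k+1) div 2} \<union> {k+2..k+1+(k+1) div 2}.
     (a = i \<and> b = i + (k+1) div 2) \<or> (b = i \<and> a = i + (k+1) div 2))"

lemma Ck_matched_range:
  assumes "Ck_matched k a b"
  shows "a \<in> {1..2*k+2} \<and> b \<in> {1..2*k+2}"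
proof -
  have "odd k" using assms by (simp add: Ck_matched_def)
  then have h: "(k+1) div 2 = k div 2 + 1" "2 * (k div 2) + 1 = k" by presburger+
  from assms obtain i where "i \<in> {1..k div 2 + 1} \<union> {k+2..k+1+(k div 2 + 1)}"
    "(a = i \<and> b = i + (k div 2 + 1)) \<or> (b = i \<and> a = i + (k div 2 + 1))"
    unfolding Ck_matched_def h(1) by blast
  then show ?thesis using h(2) by (elim UnE disjE conjE) auto
qed

lemma Ck_matched_odd:
  assumes "k = 2*h + 1"
  shows "Ck_matched k a b \<longleftrightarrow>
    (1 \<le> a \<and> (a \<le> h+1 \<or> (k+2 \<le> a \<and> a \<le> k+h+2)) \<and> b = a + (h+1)) \<or>
    (1 \<le> b \<and> (b \<le> h+1 \<or> (k+2 \<le> b \<and> b \<le> k+h+2)) \<and> a = b + (h+1))"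
proof -
  have "(k+1) div 2 = h+1" using assms by simp
  then show ?thesis unfolding Ck_matched_def using assms by auto
qed

lemma Ck_matched_diff:
  "Ck_matched k a b \<Longrightarrow> odd k \<and> (a = b + (k+1) div 2 \<or> b = a + (k+1) div 2)"
  by (auto simp: Ck_matched_def)

lemma Ck_matched_exists:
  assumes "odd k" "x \<in> {1..2*k+2}"
  shows "\<exists>p. Ck_matched k x p"
proof -
  obtain h where k: "k = 2*h + 1" using assms(1) by (metis oddE)
  show ?thesis
  proof (cases "x \<le> h+1 \<or> (k+2 \<le> x \<and> x \<le> k+h+2)")
    case True
    then have "Ck_matched k x (x + (h+1))" using assms(2) unfolding Ck_matched_odd[OF k] by simp
    then show ?thesis ..
  next
    case False
    then have "h+2 \<le> x" "x \<le> 2*h+2 \<or> 3*h+4 \<le> x" using k by auto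
    then have "Ck_matched k x (x - (h+1))"
      using assms(2) k unfolding Ck_matched_odd[OF k] by auto
    then show ?thesis ..
  qed
qed

lemma Ck_adj_iff:
  "Ck_adj k a b \<longleftrightarrow> a \<in> {1..2*k+2} \<and> b \<in> {1..2*k+2} \<and>
     ((\<exists>j\<in>{1..k div 2}. cyc_dist_eq (2*k+2) a b j) \<or> Ck_matched k a b)"
proof -
  have "(k - 1) div 2 = k div 2" if "odd k" using that by (auto elim: oddE)
  then have "Ck_adj k a b \<longleftrightarrow> {a, b} \<in> circ_pow_edges (2*k+2) (k div 2) \<or>
      odd k \<and> {a, b} \<in> {{i, i + (k+1) div 2} | i.
        i \<in> {1..(k+1) div 2} \<union> ({1..k+1+(k+1) div 2} - {1..k+1})}"
    unfolding Ck_adj_def Ck_edges_def by auto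
  also have "\<dots> \<longleftrightarrow> a \<in> {1..2*k+2} \<and> b \<in> {1..2*k+2} \<and>
      (\<exists>j\<in>{1..k div 2}. cyc_dist_eq (2*k+2) a b j) \<or> Ck_matched k a b"
  proof -
    have "{a, b} \<in> circ_pow_edges (2*k+2) (k div 2) \<longleftrightarrow> a \<in> {1..2*k+2} \<and> b \<in> {1..2*k+2} \<and>
        (\<exists>j\<in>{1..k div 2}. cyc_dist_eq (2*k+2) a b j)"
      by (rule circ_pow_edges_iff) simp
    moreover have "odd k \<and> {a, b} \<in> {{i, i + (k+1) div 2} | i.
        i \<in> {1..(k+1) div 2} \<union> ({1..k+1+(k+1) div 2} - {1..k+1})} \<longleftrightarrow> Ck_matched k a b"
      unfolding Ck_matched_def by (auto simp: doubleton_eq_iff)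
    ultimately show ?thesis by blast
  qed
  finally show ?thesis using Ck_matched_range by blast
qed

lemma Ck_adj_irrefl: "\<not> Ck_adj k x x"
  unfolding Ck_adj_iff Ck_matched_def cyc_dist_eq_def by auto

lemma finite_Ck_nbrs: "finite {y. Ck_adj k x y}"
  by (rule finite_subset[of _ "{1..2*k+2}"]) (auto simp: Ck_adj_iff)

lemma card_Ck_circulant_nbrs_ge:
  assumes x: "x \<in> {1..2*k+2}"
  shows "2 * (k div 2) \<le> card {y \<in> {1..2*k+2}. \<exists>j\<in>{1..k div 2}. cyc_dist_eq (2*k+2) x y j}"
proof -
  define m where "m = 2*k+2"
  define h where "h = k div 2"
  define nb where "nb j = modstar (x + j) m" for j
  define offs where "offs = {1..h} \<union> {m-h..<m}"
  have hm: "2*h < m" by (simp add: h_def m_def)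
  have xm: "x \<in> {1..m}" using x m_def by simp
  have "card offs = card {1..h} + card {m-h..<m}"
    unfolding offs_def by (rule card_Un_disjoint) (use hm in auto)
  then have card_offs: "card offs = 2*h" using hm by simp
  have "inj_on nb {0..<m}"
    unfolding nb_def by (rule inj_on_modstar_shift) (use xm in simp)
  then have "inj_on nb offs" by (rule inj_on_subset) (use hm in \<open>auto simp: offs_def\<close>)
  then have "card (nb ` offs) = 2*h" by (simp add: card_image card_offs)
  moreover have "nb ` offs \<subseteq> {y \<in> {1..m}. \<exists>j\<in>{1..h}. cyc_dist_eq m x y j}"
  proof
    fix y assume "y \<in> nb ` offs"
    then obtain j where j: "j \<in> offs" "y = nb j" by blast
    have "j < m" using j(1) hm by (auto simp: offs_def)
    then have y: "y = (if x + j \<le> m then x + j else x + j - m)"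
      using xm j(2) by (simp add: nb_def modstar_eq)
    have "y \<in> {1..m}" using y xm \<open>j < m\<close> j(1) by (auto simp: offs_def)
    moreover have "\<exists>j\<in>{1..h}. cyc_dist_eq m x y j"
    proof (cases "j \<le> h")
      case True
      then have "cyc_dist_eq m x y j" using y by (auto simp: cyc_dist_eq_def)
      moreover have "j \<in> {1..h}" using True j(1) hm by (auto simp: offs_def)
      ultimately show ?thesis by blast
    next
      case False
      then have "m - j \<in> {1..h}" using j(1) hm by (auto simp: offs_def)
      moreover have "cyc_dist_eq m x y (m - j)" using y \<open>j < m\<close> by (auto simp: cyc_dist_eq_def)
      ultimately show ?thesis by blast
    qed
    ultimately show "y \<in> {y \<in> {1..m}. \<exists>j\<in>{1..h}. cyc_dist_eq m x y j}" by blast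
  qed
  ultimately have "2*h \<le> card {y \<in> {1..m}. \<exists>j\<in>{1..h}. cyc_dist_eq m x y j}"
    using card_mono[of "{y \<in> {1..m}. \<exists>j\<in>{1..h}. cyc_dist_eq m x y j}" "nb ` offs"] by simp
  then show ?thesis unfolding m_def h_def .
qed

lemma Ck_degree_ge:
  assumes x: "x \<in> {1..2*k+2}"
  shows "k \<le> card {y. Ck_adj k x y}"
proof -
  define C where "C = {y \<in> {1..2*k+2}. \<exists>j\<in>{1..k div 2}. cyc_dist_eq (2*k+2) x y j}"
  have C: "C \<subseteq> {y. Ck_adj k x y}" using x by (auto simp: C_def Ck_adj_iff)
  show ?thesis
  proof (cases "even k")
    case True
    then have "k \<le> card C" using card_Ck_circulant_nbrs_ge[OF x] by (simp add: C_def)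
    also have "\<dots> \<le> card {y. Ck_adj k x y}" by (rule card_mono[OF finite_Ck_nbrs C])
    finally show ?thesis .
  next
    case False
    then have k: "(k+1) div 2 = k div 2 + 1" "2 * (k div 2) + 1 = k" by presburger+
    obtain p where p: "Ck_matched k x p" using Ck_matched_exists[OF False x] by blast
    have "p \<notin> C"
    proof
      assume "p \<in> C"
      then obtain j where "j \<le> k div 2" "cyc_dist_eq (2*k+2) x p j" by (auto simp: C_def)
      then show False using k Ck_matched_diff[OF p] unfolding cyc_dist_eq_def
        by (elim disjE conjE; linarith)
    qed
    have "k \<le> card C + 1" using k(2) card_Ck_circulant_nbrs_ge[OF x] unfolding C_def by linarith
    also have "\<dots> = card (insert p C)" using \<open>p \<notin> C\<close> by (simp add: C_def)
    also have "\<dots> \<le> card {y. Ck_adj k x y}"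
    proof (rule card_mono[OF finite_Ck_nbrs])
      have "Ck_adj k x p" using p Ck_matched_range[OF p] unfolding Ck_adj_iff by blast
      then show "insert p C \<subseteq> {y. Ck_adj k x y}" using C by blast
    qed
    finally show ?thesis .
  qed
qed

definition Ck_closed_nbhd :: "nat \<Rightarrow> nat \<Rightarrow> nat set" where
  "Ck_closed_nbhd k x = insert x {y. Ck_adj k x y}"

lemma Ck_closed_nbhd_subset: "x \<in> {1..2*k+2} \<Longrightarrow> Ck_closed_nbhd k x \<subseteq> {1..2*k+2}"
  by (auto simp: Ck_closed_nbhd_def Ck_adj_iff)

lemma card_Ck_closed_nbhd_ge:
  assumes "x \<in> {1..2*k+2}"
  shows "k + 1 \<le> card (Ck_closed_nbhd k x)"
proof -
  have "x \<notin> {y. Ck_adj k x y}" using Ck_adj_irrefl by simp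
  then have "card (Ck_closed_nbhd k x) = card {y. Ck_adj k x y} + 1"
    using finite_Ck_nbrs unfolding Ck_closed_nbhd_def by simp
  then show ?thesis using Ck_degree_ge[OF assms] by simp
qed

lemma Ck_closed_nbhd_near:
  assumes "z \<in> Ck_closed_nbhd k x"
  shows "(\<exists>j \<le> k div 2. cyc_dist_eq (2*k+2) x z j) \<or> Ck_matched k x z"
  using assms unfolding Ck_closed_nbhd_def Ck_adj_iff by (auto simp: cyc_dist_eq_def)

definition antipode :: "nat \<Rightarrow> nat \<Rightarrow> nat" where
  "antipode k x = (if x \<le> k+1 then x + (k+1) else x - (k+1))"

lemma antipode_range: "x \<in> {1..2*k+2} \<Longrightarrow> antipode k x \<in> {1..2*k+2}"
  by (auto simp: antipode_def)

lemma Ck_closed_nbhd_antipode_disjoint: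
  assumes x: "x \<in> {1..2*k+2}"
  shows "Ck_closed_nbhd k x \<inter> Ck_closed_nbhd k (antipode k x) = {}"
proof -
  obtain h where k: "k = 2*h \<or> k = 2*h + 1" by (metis oddE evenE)
  then have "k div 2 = h" by auto
  define y where "y = antipode k x"
  have y: "y = x + (k+1) \<or> x = y + (k+1)" using x by (auto simp: y_def antipode_def)
  have match: "k = 2*h + 1 \<and> (a = b + (h+1) \<or> b = a + (h+1))" if "Ck_matched k a b" for a b
    using Ck_matched_diff[OF that] k by auto
  have False if "z \<in> Ck_closed_nbhd k x" "z \<in> Ck_closed_nbhd k y" for z
    using Ck_closed_nbhd_near[OF that(1)] Ck_closed_nbhd_near[OF that(2)]
    unfolding \<open>k div 2 = h\<close>
  proof (elim disjE exE conjE)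
    fix j j' assume "j \<le> h" "cyc_dist_eq (2*k+2) x z j" "j' \<le> h" "cyc_dist_eq (2*k+2) y z j'"
    then show False using y k unfolding cyc_dist_eq_def by (elim disjE; linarith)
  next
    fix j assume "j \<le> h" "cyc_dist_eq (2*k+2) x z j" "Ck_matched k y z"
    then show False using y match[of y z] unfolding cyc_dist_eq_def by (elim disjE; linarith)
  next
    fix j assume "Ck_matched k x z" "j \<le> h" "cyc_dist_eq (2*k+2) y z j"
    then show False using y match[of x z] unfolding cyc_dist_eq_def by (elim disjE; linarith)
  next
    assume "Ck_matched k x z" "Ck_matched k y z"
    moreover have "k = 2*h + 1" using match \<open>Ck_matched k x z\<close> by blast
    ultimately show False using y unfolding Ck_matched_odd[OF \<open>k = 2*h + 1\<close>]
      by (elim disjE conjE; linarith)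
  qed
  then show ?thesis unfolding y_def by blast
qed

lemma card_Ck_compl_closed_nbhd_le:
  assumes "x \<in> {1..2*k+2}"
  shows "card ({1..2*k+2} - insert (antipode k x) (Ck_closed_nbhd k x)) \<le> k"
proof -
  have "antipode k x \<notin> Ck_closed_nbhd k x"
    using Ck_closed_nbhd_antipode_disjoint[OF assms] by (auto simp: Ck_closed_nbhd_def)
  moreover have "insert (antipode k x) (Ck_closed_nbhd k x) \<subseteq> {1..2*k+2}"
    using Ck_closed_nbhd_subset[OF assms] antipode_range[OF assms] by blast
  moreover have "finite (Ck_closed_nbhd k x)"
    using Ck_closed_nbhd_subset[OF assms] finite_subset by blast
  ultimately show ?thesis
    using card_Ck_closed_nbhd_ge[OF assms] by (simp add: card_Diff_subset)
qed

lemma has_starI: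
  assumes "c \<in> S" "N \<subseteq> S" "finite N" "c \<notin> N" "k \<le> card N" "\<forall>x\<in>N. {c, x} \<in> E"
  shows "has_star S E k"
proof -
  obtain L where "L \<subseteq> N" "card L = k" using obtain_subset_with_card_n assms(5) by metis
  then show ?thesis
    using assms finite_subset unfolding has_star_def by (metis subset_iff)
qed

lemma not_has_starI:
  assumes "\<And>c. c \<in> S \<Longrightarrow>
    \<exists>P. finite P \<and> card P \<le> k \<and> insert c {x \<in> S. {c, x} \<in> E} \<subseteq> P"
  shows "\<not> has_star S E k"
proof
  assume "has_star S E k"
  then obtain c L where
    cL: "c \<in> S" "L \<subseteq> S" "c \<notin> L" "card L = k" "finite L" "\<forall>x\<in>L. {c, x} \<in> E"
    unfolding has_star_def by blast
  obtain P where P: "finite P" "card P \<le> k" "insert c {x \<in> S. {c, x} \<in> E} \<subseteq> P"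
    using assms cL(1) by blast
  have "insert c L \<subseteq> P" using P(3) cL by blast
  then have "card (insert c L) \<le> card P" by (rule card_mono[OF P(1)])
  then show False using cL P(2) by simp
qed

lemma Diff_closed_nbhd_iff:
  "v \<in> V - closed_nbhd V E D \<longleftrightarrow> v \<in> V \<and> v \<notin> D \<and> (\<forall>w\<in>D. {v, w} \<notin> E)"
  by (auto simp: closed_nbhd_def)

lemma iota_star_eqI:
  assumes "finite V" "star_isolating V E k D" "card D = m"
    and "\<And>D'. star_isolating V E k D' \<Longrightarrow> m \<le> card D'"
  shows "iota_star V E k = m"
proof -
  have "{D. star_isolating V E k D} \<subseteq> Pow V" by (auto simp: star_isolating_def)
  then have "finite (card ` {D. star_isolating V E k D})"
    using assms(1) finite_subset by blast
  then show ?thesis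
    unfolding iota_star_def using assms(2-4) by (intro Min_eqI) auto
qed

locale B_graph =
  fixes k n :: nat
  assumes n_ge: "2*k+3 \<le> n"
begin

abbreviation "q \<equiv> n div (2*k+3)"
abbreviation "r \<equiv> n mod (2*k+3)"
abbreviation "V \<equiv> B_verts k n"
abbreviation "E \<equiv> B_edges k n"

lemma q_pos: "1 \<le> q"
  using div_le_mono[OF n_ge, of "2*k+3"] by simp

lemma U_in_V_iff: "U a \<in> V \<longleftrightarrow> a \<in> {1..q+r}"
  by (auto simp: B_verts_def Let_def)

lemma W_in_V_iff: "W i j \<in> V \<longleftrightarrow> i \<in> {1..q} \<and> j \<in> {1..2*k+2}"
  by (auto simp: B_verts_def Let_def)

lemma finite_V: "finite V"
proof -
  have "V \<subseteq> U ` {1..q+r} \<union> (\<lambda>(i, j). W i j) ` ({1..q} \<times> {1..2*k+2})"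
    by (auto simp: B_verts_def Let_def)
  then show ?thesis by (rule finite_subset) simp
qed

lemma edge_W_cases:
  "{W i z, v} \<in> E \<Longrightarrow> (v = U i \<and> z = 1) \<or> (\<exists>b. v = W i b \<and> Ck_adj k z b)"
  unfolding B_edges_def Let_def
  by (auto simp: doubleton_eq_iff Ck_adj_def insert_commute split: if_splits)

lemma edge_tail_cases:
  "{U a, v} \<in> E \<Longrightarrow> q+2 \<le> a \<Longrightarrow> \<exists>b. v = U b \<and> q+1 \<le> b \<and> b \<le> q+r"
  unfolding B_edges_def Let_def
  by (auto simp: doubleton_eq_iff split: if_splits)

lemma edge_U_W: "i \<in> {1..q} \<Longrightarrow> {U i, W i 1} \<in> E"
  unfolding B_edges_def Let_def by blast

lemma edge_U_path: "1 \<le> r \<Longrightarrow> {U q, U (q+1)} \<in> E"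
  using q_pos unfolding B_edges_def Let_def by auto

lemma edge_U_tail: "j \<in> {1..r-1} \<Longrightarrow> {U (q+r), U (q+j)} \<in> E"
  unfolding B_edges_def Let_def by auto

lemma edge_W_W: "i \<in> {1..q} \<Longrightarrow> Ck_adj k a b \<Longrightarrow> {W i a, W i b} \<in> E"
  unfolding B_edges_def Let_def Ck_adj_def by blast

definition isolating_set :: "bvert set" where
  "isolating_set = U ` {1..q} \<union> (\<lambda>i. W i (k+2)) ` {1..q} \<union>
     (if k+2 \<le> r then {U (q+r)} else {})"

abbreviation "remaining \<equiv> V - closed_nbhd V E isolating_set"

lemma remaining_W:
  assumes "W i j \<in> remaining"
  shows "i \<in> {1..q} \<and> j \<in> {1..2*k+2} - insert 1 (Ck_closed_nbhd k (k+2))"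
proof -
  have ij: "i \<in> {1..q}" "j \<in> {1..2*k+2}" "W i j \<notin> isolating_set"
    and no_edge: "\<forall>w\<in>isolating_set. {W i j, w} \<notin> E"
    using assms unfolding Diff_closed_nbhd_iff W_in_V_iff by auto
  have "U i \<in> isolating_set" "W i (k+2) \<in> isolating_set"
    using ij(1) by (auto simp: isolating_set_def)
  then have "j \<noteq> 1" "j \<noteq> k+2" "\<not> Ck_adj k (k+2) j"
    using no_edge ij edge_U_W[OF ij(1)] edge_W_W[OF ij(1), of j "k+2"]
    by (auto simp: insert_commute Ck_adj_def)
  then show ?thesis using ij by (auto simp: Ck_closed_nbhd_def)
qed

lemma remaining_U:
  assumes "U a \<in> remaining"
  shows "a \<in> {q+2..q+r} \<and> r \<le> k+1"
proof -
  have a: "a \<in> {1..q+r}" "U a \<notin> isolating_set"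
    and no_edge: "\<forall>w\<in>isolating_set. {U a, w} \<notin> E"
    using assms unfolding Diff_closed_nbhd_iff U_in_V_iff by auto
  have "q < a" using a by (auto simp: isolating_set_def)
  moreover have "a \<noteq> q+1"
  proof
    assume "a = q+1"
    then have "{U a, U q} \<in> E" using edge_U_path a(1) by (auto simp: insert_commute)
    moreover have "U q \<in> isolating_set" using q_pos by (auto simp: isolating_set_def)
    ultimately show False using no_edge by blast
  qed
  moreover have "r \<le> k+1"
  proof (rule ccontr)
    assume "\<not> r \<le> k+1"
    then have hub: "U (q+r) \<in> isolating_set" by (simp add: isolating_set_def)
    then have "a \<noteq> q+r" using a(2) by blast
    then have "a - q \<in> {1..r-1}" using a(1) \<open>q < a\<close> by auto
    then have "{U (q+r), U (q + (a-q))} \<in> E" by (rule edge_U_tail)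
    then have "{U (q+r), U a} \<in> E" using \<open>q < a\<close> by simp
    then show False using no_edge hub by (auto simp: insert_commute)
  qed
  ultimately show ?thesis using a(1) by auto
qed

lemma remaining_nbrs_W:
  assumes "W i j \<in> remaining"
  shows "insert (W i j) {x \<in> remaining. {W i j, x} \<in> E}
    \<subseteq> W i ` ({1..2*k+2} - insert 1 (Ck_closed_nbhd k (k+2)))"
proof
  fix x assume "x \<in> insert (W i j) {x \<in> remaining. {W i j, x} \<in> E}"
  then consider "x = W i j" | "x \<in> remaining" "{W i j, x} \<in> E" by blast
  then show "x \<in> W i ` ({1..2*k+2} - insert 1 (Ck_closed_nbhd k (k+2)))"
  proof cases
    case 1 then show ?thesis using remaining_W[OF assms] by blast
  next
    case 2
    have "j \<noteq> 1" using remaining_W[OF assms] by blast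
    then obtain b where "x = W i b" using edge_W_cases[OF 2(2)] by blast
    then show ?thesis using remaining_W 2(1) by blast
  qed
qed

lemma remaining_nbrs_U:
  assumes "U a \<in> remaining"
  shows "insert (U a) {x \<in> remaining. {U a, x} \<in> E} \<subseteq> U ` {q+2..q+r}"
proof
  fix x assume "x \<in> insert (U a) {x \<in> remaining. {U a, x} \<in> E}"
  then consider "x = U a" | "x \<in> remaining" "{U a, x} \<in> E" by blast
  then show "x \<in> U ` {q+2..q+r}"
  proof cases
    case 1 then show ?thesis using remaining_U[OF assms] by blast
  next
    case 2
    have "q+2 \<le> a" using remaining_U[OF assms] by auto
    then obtain b where "x = U b" using edge_tail_cases[OF 2(2)] by blast
    then show ?thesis using remaining_U 2(1) by blast
  qed
qed

lemma isolating_set_isolating: "star_isolating V E k isolating_set"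
proof -
  have "\<exists>P. finite P \<and> card P \<le> k \<and> insert c {x \<in> remaining. {c, x} \<in> E} \<subseteq> P"
    if "c \<in> remaining" for c
  proof (cases c)
    case (W i j)
    let ?T = "{1..2*k+2} - insert 1 (Ck_closed_nbhd k (k+2))"
    have "antipode k (k+2) = 1" by (simp add: antipode_def)
    then have "card ?T \<le> k" using card_Ck_compl_closed_nbhd_le[of "k+2" k] by simp
    then have "card (W i ` ?T) \<le> k" using card_image_le[of ?T "W i"] by simp
    then show ?thesis using remaining_nbrs_W that W by blast
  next
    case (U a)
    have "r \<le> k+1" using remaining_U that U by blast
    then have "card (U ` {q+2..q+r}) \<le> k" using card_image_le[of "{q+2..q+r}" U] by simp
    then show ?thesis using remaining_nbrs_U that U by blast
  qed
  then have "\<not> has_star remaining E k" by (rule not_has_starI)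
  moreover have "isolating_set \<subseteq> V"
    using q_pos by (auto simp: isolating_set_def U_in_V_iff W_in_V_iff)
  ultimately show ?thesis unfolding star_isolating_def by blast
qed

lemma card_isolating_set: "card isolating_set = 2*q + (if k+2 \<le> r then 1 else 0)"
proof -
  have "card (U ` {1..q} \<union> (\<lambda>i. W i (k+2)) ` {1..q}) = 2*q"
    by (subst card_Un_disjoint) (auto simp: card_image inj_on_def)
  moreover have "U (q+r) \<notin> U ` {1..q} \<union> (\<lambda>i. W i (k+2)) ` {1..q}" if "k+2 \<le> r"
    using that by auto
  ultimately show ?thesis by (simp add: isolating_set_def)
qed

definition block :: "nat \<Rightarrow> bvert set" where
  "block i = insert (U i) (W i ` {1..2*k+2})"

lemma star_in_block:
  assumes i: "i \<in> {1..q}" and x: "x \<in> {1..2*k+2}"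
    and D: "\<forall>v\<in>D \<inter> block i. v = W i x \<or> (v = U i \<and> x = 1)"
  shows "has_star (V - closed_nbhd V E D) E k"
proof -
  define y where "y = antipode k x"
  have y: "y \<in> {1..2*k+2}" using antipode_range[OF x] by (simp add: y_def)
  have far: "W i z \<in> V - closed_nbhd V E D" if z: "z \<in> Ck_closed_nbhd k y" for z
  proof -
    have "z \<notin> Ck_closed_nbhd k x"
      using z Ck_closed_nbhd_antipode_disjoint[OF x] unfolding y_def by blast
    then have zx: "z \<noteq> x" "\<not> Ck_adj k z x"
      by (auto simp: Ck_closed_nbhd_def Ck_adj_def insert_commute)
    have zm: "z \<in> {1..2*k+2}" using z Ck_closed_nbhd_subset[OF y] by blast
    have "W i z \<notin> D" using D zx zm by (auto simp: block_def)
    moreover have "{W i z, w} \<notin> E" if "w \<in> D" for w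
    proof
      assume "{W i z, w} \<in> E"
      then consider "w = U i" "z = 1" | b where "w = W i b" "Ck_adj k z b"
        using edge_W_cases by blast
      then show False
      proof cases
        case 1 then show False using D that zx by (auto simp: block_def)
      next
        case 2
        then have "b \<in> {1..2*k+2}" by (simp add: Ck_adj_iff)
        then show False using D that zx 2 by (auto simp: block_def)
      qed
    qed
    ultimately show ?thesis using i zm unfolding Diff_closed_nbhd_iff W_in_V_iff by blast
  qed
  show ?thesis
  proof (rule has_starI)
    show "W i y \<in> V - closed_nbhd V E D" using far by (simp add: Ck_closed_nbhd_def)
    show "W i ` {l. Ck_adj k y l} \<subseteq> V - closed_nbhd V E D"
      using far by (auto simp: Ck_closed_nbhd_def)
    show "finite (W i ` {l. Ck_adj k y l})" using finite_Ck_nbrs by simp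
    show "W i y \<notin> W i ` {l. Ck_adj k y l}" using Ck_adj_irrefl by auto
    show "k \<le> card (W i ` {l. Ck_adj k y l})"
      using Ck_degree_ge[OF y] by (simp add: card_image inj_on_def)
    show "\<forall>v\<in>W i ` {l. Ck_adj k y l}. {W i y, v} \<in> E" using edge_W_W[OF i] by blast
  qed
qed

lemma two_le_card_block:
  assumes i: "i \<in> {1..q}" and D: "star_isolating V E k D"
  shows "2 \<le> card (D \<inter> block i)"
proof (rule ccontr)
  assume "\<not> 2 \<le> card (D \<inter> block i)"
  then have "card (D \<inter> block i) \<le> Suc 0" by simp
  moreover have "finite (D \<inter> block i)" by (simp add: block_def)
  ultimately have le1: "\<forall>v\<in>D \<inter> block i. \<forall>w\<in>D \<inter> block i. v = w"
    using card_le_Suc0_iff_eq by blast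
  obtain x where "x \<in> {1..2*k+2}" "\<forall>v\<in>D \<inter> block i. v = W i x \<or> (v = U i \<and> x = 1)"
  proof (cases "\<exists>x\<in>{1..2*k+2}. W i x \<in> D")
    case True
    then obtain x where x: "x \<in> {1..2*k+2}" "W i x \<in> D" by blast
    then have "W i x \<in> D \<inter> block i" by (simp add: block_def)
    then show ?thesis using that[OF x(1)] le1 by blast
  next
    case False
    then show ?thesis using that[of 1] by (auto simp: block_def)
  qed
  then have "has_star (V - closed_nbhd V E D) E k" using star_in_block[OF i] by blast
  then show False using D by (simp add: star_isolating_def)
qed

lemma tail_meets:
  assumes r: "k+2 \<le> r" and D: "star_isolating V E k D"
  shows "D \<inter> U ` {q+1..q+r} \<noteq> {}"
proof
  assume empty: "D \<inter> U ` {q+1..q+r} = {}"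
  have far: "U a \<in> V - closed_nbhd V E D" if "a \<in> {q+2..q+r}" for a
  proof -
    have "{U a, w} \<notin> E" if "w \<in> D" for w
      using edge_tail_cases[of a w] \<open>a \<in> {q+2..q+r}\<close> empty that by fastforce
    then show ?thesis using that empty unfolding Diff_closed_nbhd_iff U_in_V_iff by auto
  qed
  have "has_star (V - closed_nbhd V E D) E k"
  proof (rule has_starI)
    show "U (q+r) \<in> V - closed_nbhd V E D" using far r by simp
    show "U ` {q+2..q+k+1} \<subseteq> V - closed_nbhd V E D" using far r by auto
    show "finite (U ` {q+2..q+k+1})" by simp
    show "U (q+r) \<notin> U ` {q+2..q+k+1}" using r by auto
    have "card (U ` {q+2..q+k+1}) = card {q+2..q+k+1}" by (rule card_image) (simp add: inj_on_def)
    then show "k \<le> card (U ` {q+2..q+k+1})" by simp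
    show "\<forall>v\<in>U ` {q+2..q+k+1}. {U (q+r), v} \<in> E"
    proof
      fix v assume "v \<in> U ` {q+2..q+k+1}"
      then obtain a where a: "v = U a" "a \<in> {q+2..q+k+1}" by blast
      then have "a - q \<in> {1..r-1}" using r by auto
      then have "{U (q+r), U (q + (a-q))} \<in> E" by (rule edge_U_tail)
      then show "{U (q+r), v} \<in> E" using a by simp
    qed
  qed
  then show False using D by (simp add: star_isolating_def)
qed

lemma card_isolating_ge:
  assumes D: "star_isolating V E k D"
  shows "2*q + (if k+2 \<le> r then 1 else 0) \<le> card D"
proof -
  have finD: "finite D"
    using D finite_V finite_subset unfolding star_isolating_def by blast
  define A where "A = (\<Union>i\<in>{1..q}. D \<inter> block i)"
  define R where "R = D \<inter> U ` {q+1..q+r}"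
  have "card A = (\<Sum>i\<in>{1..q}. card (D \<inter> block i))"
    unfolding A_def by (rule card_UN_disjoint) (auto simp: block_def finD)
  also have "\<dots> \<ge> (\<Sum>i\<in>{1..q}. 2)" by (rule sum_mono) (use two_le_card_block D in auto)
  finally have "2*q \<le> card A" by simp
  moreover have "(if k+2 \<le> r then 1 else 0) \<le> card R"
    using tail_meets[OF _ D] finD by (auto simp: R_def card_gt_0_iff Suc_le_eq)
  moreover have "card A + card R = card (A \<union> R)"
    by (rule card_Un_disjoint[symmetric]) (auto simp: A_def R_def block_def finD)
  moreover have "card (A \<union> R) \<le> card D"
    by (rule card_mono[OF finD]) (auto simp: A_def R_def)
  ultimately show ?thesis by linarith
qed

end

lemma two_mult_div:
  fixes k n :: nat
  shows "(2*n) div (2*k+3) = 2*(n div (2*k+3)) + (if k+2 \<le> n mod (2*k+3) then 1 else 0)"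
proof -
  define Q r where "Q = n div (2*k+3)" and "r = n mod (2*k+3)"
  have "n = (2*k+3) * Q + r" and r: "r < 2*k+3"
    unfolding Q_def r_def by simp_all
  then have n: "2*n = (2*k+3) * (2*Q) + 2*r" by simp
  have "(2*n) div (2*k+3) = 2*Q + (if k+2 \<le> r then 1 else 0)"
  proof (rule div_nat_eqI)
    show "(2*k+3) * (2*Q + (if k+2 \<le> r then 1 else 0)) \<le> 2*n"
      unfolding n by (simp add: distrib_left)
    show "2*n < (2*k+3) * Suc (2*Q + (if k+2 \<le> r then 1 else 0))"
      unfolding n using r by (simp add: distrib_left)
  qed
  then show ?thesis unfolding Q_def r_def .
qed

theorem lemma3:
  fixes k n :: nat
  assumes "k \<ge> 2" and "n \<ge> 2*k+3"
  shows "iota_star (B_verts k n) (B_edges k n) k = (2*n) div (2*k+3)"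
proof -
  (* The argument works for every k. *)
  interpret B_graph k n by unfold_locales (rule assms(2))
  show ?thesis
    unfolding two_mult_div
    by (rule iota_star_eqI[OF finite_V isolating_set_isolating card_isolating_set card_isolating_ge])
qed

end
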